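(* Let $N=\mathbb R^{2n}$ with Darboux coordinates $(\tilde\rho,y)$, tautological one-form $\theta=y_i\,d\tilde\rho^i$ and symplectic form $\Omega=-d\theta=d\tilde\rho^i\wedge dy_i$; let $N_{\mathbb C}\simeq\mathbb C^{2n}$ be its complexification, with $\theta,\Omega$ extended $\mathbb C$-bilinearly ($\Omega_{\mathbb C}$). Let $M\in\mathrm{Sym}(n,\mathbb C)$ with $\mathrm{Im}\,M$ nondegenerate, let $L_M^{(+)}=\{(u,Mu)\}$, $L_M^{(-)}=\{(u,\bar Mu)\}$ ($u\in\mathbb C^n$) be the corresponding constant subbundles of $TN_{\mathbb C}$ (so $TN_{\mathbb C}=L_M^{(+)}\oplus L_M^{(-)}$), and let $\Pi_M^{(+)}$ be the projector onto $L_M^{(+)}$ along $L_M^{(-)}$. Let $H:N\to\mathbb R$ be real-analytic, denote also by $H$ its holomorphic extension to $N_{\mathbb C}$, and let $X_H$ be the complex Hamiltonian vector field defined by $\iota_{X_H}\Omega_{\mathbb C}=dH$. Consider the action $\mathcal S[z]=\int_{t_0}^{t_1}(\theta(\dot z(t))-H(z(t)))\,dt$ on $C^1$ curves $z:[t_0,t_1]\to N_{\mathbb C}$. Call $z$ admissible if $\dot z(t)\in L_M^{(+)}$ for all $t$, and call a $C^1$ vector field $\delta z(t)\in T_{z(t)}N_{\mathbb C}$ along $z$ an admissible variation if $\delta z(t)\in L_M^{(-)}$ for all $t$ and $\delta z(t_0)=\delta z(t_1)=0$. Then an admissible curve $z$ is stationary for $\mathcal S$ (first variation $\frac{d}{d\varepsilon}|_{\varepsilon=0}\mathcal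 S[z_\varepsilon]=0$ in $\mathbb C$, for real-parameter variations $z_\varepsilon$ with $\frac{d}{d\varepsilon}|_{0}z_\varepsilon=\delta z$) under all admissible variations if and only if $\dot z(t)=\Pi_M^{(+)}X_H(z(t))$ for all $t\in[t_0,t_1]$. *)

theory Defs
  imports "HOL-Analysis.Analysis"
begin

text \<open>Points of N_C = C^{2n} are pairs (rho, y) of vectors in C^n (index type 'n).\<close>
type_synonym 'n pt = "(complex^'n) \<times> (complex^'n)"

definition cmul :: "complex \<Rightarrow> 'n::finite pt \<Rightarrow> 'n pt" where
  "cmul c v = (c *s fst v, c *s snd v)"

definition theta :: "'n::finite pt \<Rightarrow> 'n pt \<Rightarrow> complex" where
  "theta z v = (\<Sum>i\<in>UNIV. snd z $ i * fst v $ i)"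

definition Omega :: "'n::finite pt \<Rightarrow> 'n pt \<Rightarrow> complex" where
  "Omega a b = (\<Sum>i\<in>UNIV. fst a $ i * snd b $ i - snd a $ i * fst b $ i)"

text \<open>H is holomorphic on all of C^{2n}: real-Frechet differentiable with C-linear derivative.\<close>
definition holo :: "('n::finite pt \<Rightarrow> complex) \<Rightarrow> bool" where
  "holo H \<longleftrightarrow> (\<forall>z. H differentiable (at z) \<and>
      (\<forall>v. frechet_derivative H (at z) (cmul \<i> v) = \<i> * frechet_derivative H (at z) v))"

definition real_on_reals :: "('n::finite pt \<Rightarrow> complex) \<Rightarrow> bool" where
  "real_on_reals H \<longleftrightarrow> (\<forall>rho y. (\<forall>i. rho $ i \<in> \<real> \<and> y $ i \<in> \<real>) \<longrightarrow> H (rho, y) \<in> \<real>)"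

definition ham_vf :: "('n::finite pt \<Rightarrow> complex) \<Rightarrow> 'n pt \<Rightarrow> 'n pt" where
  "ham_vf H z = (THE X. \<forall>v. Omega X v = frechet_derivative H (at z) v)"

definition cnj_mat :: "complex^'n^'n \<Rightarrow> complex^'n^'n" where
  "cnj_mat M = (\<chi> i j. cnj (M $ i $ j))"

definition im_mat :: "complex^'n^'n \<Rightarrow> real^'n^'n" where
  "im_mat M = (\<chi> i j. Im (M $ i $ j))"

definition Lplus :: "complex^'n::finite^'n \<Rightarrow> 'n pt set" where
  "Lplus M = {(u, M *v u) | u. True}"

definition Lminus :: "complex^'n::finite^'n \<Rightarrow> 'n pt set" where
  "Lminus M = {(u, cnj_mat M *v u) | u. True}"

definition proj_plus :: "complex^'n::finite^'n \<Rightarrow> 'n pt \<Rightarrow> 'n pt" where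
  "proj_plus M v = (THE a. a \<in> Lplus M \<and> v - a \<in> Lminus M)"

text \<open>C^1 on the closed interval [t0,t1] (one-sided derivatives at the endpoints).\<close>
definition C1_on :: "(real \<Rightarrow> 'a::real_normed_vector) \<Rightarrow> real \<Rightarrow> real \<Rightarrow> bool" where
  "C1_on f t0 t1 \<longleftrightarrow> (\<exists>f'. (\<forall>t\<in>{t0..t1}. (f has_vector_derivative f' t) (at t within {t0..t1}))
                         \<and> continuous_on {t0..t1} f')"

definition action :: "('n::finite pt \<Rightarrow> complex) \<Rightarrow> (real \<Rightarrow> 'n pt) \<Rightarrow> real \<Rightarrow> real \<Rightarrow> complex" where
  "action H z t0 t1 = integral {t0..t1}
     (\<lambda>t. theta (z t) (vector_derivative z (at t within {t0..t1})) - H (z t))"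

definition admissible :: "complex^'n::finite^'n \<Rightarrow> (real \<Rightarrow> 'n pt) \<Rightarrow> real \<Rightarrow> real \<Rightarrow> bool" where
  "admissible M z t0 t1 \<longleftrightarrow> C1_on z t0 t1 \<and>
     (\<forall>t\<in>{t0..t1}. vector_derivative z (at t within {t0..t1}) \<in> Lplus M)"

definition adm_var :: "complex^'n::finite^'n \<Rightarrow> (real \<Rightarrow> 'n pt) \<Rightarrow> real \<Rightarrow> real \<Rightarrow> bool" where
  "adm_var M dz t0 t1 \<longleftrightarrow> C1_on dz t0 t1 \<and> (\<forall>t\<in>{t0..t1}. dz t \<in> Lminus M)
     \<and> dz t0 = 0 \<and> dz t1 = 0"

end

theory Submission
  imports Defs "HOL-Complex_Analysis.Cauchy_Integral_Formula"
begin

(* Integrating theta(z, dz') by parts, the first variation of the action at z in the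
   direction of a variation dz vanishing at the endpoints is the integral of
   Omega(z' - X_H(z), dz).  Since M is symmetric, L- is Lagrangian, i.e. its own
   Omega-orthogonal complement.  Testing with the variations c(t) w, w in L-, the
   du Bois-Reymond lemma turns stationarity into z' - X_H(z) in L- pointwise; as z' lies
   in L+ and C^2n = L+ (+) L- (Im M being invertible), this says z' = Pi+ X_H(z). *)

lemma cmul_eq_scaleR: "cmul c v = Re c *\<^sub>R v + Im c *\<^sub>R cmul \<i> v"
proof -
  have "c * x = Re c *\<^sub>R x + Im c *\<^sub>R (\<i> * x)" for x :: complex
    by (simp add: complex_eq_iff)
  then show ?thesis by (simp add: cmul_def prod_eq_iff vec_eq_iff)
qed

lemma cmul_0 [simp]: "cmul 0 v = 0"
  by (simp add: cmul_def zero_prod_def)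

lemma bounded_linear_cmul: "bounded_linear (\<lambda>c. cmul c v)"
proof -
  have "linear (\<lambda>c. cmul c v)"
    by (rule linearI) (simp_all add: cmul_def vec_eq_iff distrib_right)
  then show ?thesis by (rule linear_conv_bounded_linear[THEN iffD1])
qed

lemma linear_cmul_commute:
  assumes "linear f" and "\<And>v. f (cmul \<i> v) = \<i> * f v"
  shows "f (cmul c v) = c * (f v :: complex)"
proof -
  have "f (cmul c v) = Re c *\<^sub>R f v + Im c *\<^sub>R (\<i> * f v)"
    by (simp add: cmul_eq_scaleR[of c v] linear_add[OF assms(1)] linear_scale[OF assms(1)] assms(2))
  also have "\<dots> = c * f v"
    by (simp add: complex_eq_iff)
  finally show ?thesis .
qed

lemma Omega_eq_theta: "Omega a b = theta b a - theta a b"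
  by (simp add: Omega_def theta_def sum_subtractf mult.commute)

lemma Omega_diff_left: "Omega (a - b) v = Omega a v - Omega b v"
  by (simp add: Omega_def sum_subtractf[symmetric] algebra_simps)

lemma Omega_cmul_right: "Omega a (cmul c v) = c * Omega a v"
  by (simp add: Omega_def cmul_def sum_distrib_left algebra_simps)

lemma continuous_on_theta [continuous_intros]:
  "continuous_on S p \<Longrightarrow> continuous_on S q \<Longrightarrow> continuous_on S (\<lambda>s. theta (p s) (q s))"
  unfolding theta_def by (intro continuous_intros)

lemma continuous_on_Omega [continuous_intros]:
  "continuous_on S p \<Longrightarrow> continuous_on S q \<Longrightarrow> continuous_on S (\<lambda>s. Omega (p s) (q s))"
  unfolding Omega_eq_theta by (intro continuous_intros)

lemma has_vector_derivative_theta: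
  assumes "(p has_vector_derivative p') (at x within S)"
    and "(q has_vector_derivative q') (at x within S)"
  shows "((\<lambda>t. theta (p t) (q t)) has_vector_derivative theta p' (q x) + theta (p x) q')
           (at x within S)"
proof -
  have "((\<lambda>t. snd (p t) $ i) has_vector_derivative snd p' $ i) (at x within S)" for i
    using bounded_linear.has_vector_derivative[OF
        bounded_linear_compose[OF bounded_linear_vec_nth bounded_linear_snd] assms(1)] .
  moreover have "((\<lambda>t. fst (q t) $ i) has_vector_derivative fst q' $ i) (at x within S)" for i
    using bounded_linear.has_vector_derivative[OF
        bounded_linear_compose[OF bounded_linear_vec_nth bounded_linear_fst] assms(2)] .
  ultimately have "((\<lambda>t. \<Sum>i\<in>UNIV. snd (p t) $ i * fst (q t) $ i) has_vector_derivative
      (\<Sum>i\<in>UNIV. snd (p x) $ i * fst q' $ i + snd p' $ i * fst (q x) $ i)) (at x within S)"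
    by (intro has_vector_derivative_sum has_vector_derivative_mult)
  then show ?thesis by (simp add: theta_def sum.distrib add.commute)
qed

section \<open>The Lagrangian subspaces L+ and L-\<close>

lemma Lminus_eq_Lplus_cnj_mat: "Lminus M = Lplus (cnj_mat M)"
  by (simp add: Lminus_def Lplus_def)

lemma transpose_cnj_mat: "transpose (cnj_mat M) = cnj_mat (transpose M)"
  by (simp add: transpose_def cnj_mat_def)

lemma symmetric_matrix_entry: "transpose A = A \<Longrightarrow> A $ i $ j = A $ j $ i"
  by (metis transpose_def vec_lambda_beta)

lemma mem_Lplus_iff: "a \<in> Lplus A \<longleftrightarrow> snd a = A *v fst a"
  by (cases a) (simp add: Lplus_def)

lemma cmul_mem_Lplus: "a \<in> Lplus A \<Longrightarrow> cmul c a \<in> Lplus A"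
  by (simp add: mem_Lplus_iff cmul_def vector_scalar_commute)

lemma diff_mem_Lplus_commute: "a - b \<in> Lplus A \<longleftrightarrow> b - a \<in> Lplus A"
  unfolding mem_Lplus_iff by (simp add: matrix_vector_mult_diff_distrib) (metis minus_diff_eq)

lemma Omega_Lplus_eq_0:
  assumes A: "transpose A = A" and "a \<in> Lplus A" "b \<in> Lplus A"
  shows "Omega a b = 0"
proof -
  obtain u w where a: "a = (u, A *v u)" and b: "b = (w, A *v w)"
    using assms(2,3) unfolding Lplus_def by blast
  have "(\<Sum>i\<in>UNIV. u $ i * (A *v w) $ i) = (\<Sum>i\<in>UNIV. \<Sum>j\<in>UNIV. A $ i $ j * u $ i * w $ j)"
    by (simp add: matrix_vector_mult_def sum_distrib_left mult_ac)
  also have "\<dots> = (\<Sum>j\<in>UNIV. \<Sum>i\<in>UNIV. A $ j $ i * u $ i * w $ j)"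
    by (subst sum.swap) (simp add: symmetric_matrix_entry[OF A])
  also have "\<dots> = (\<Sum>j\<in>UNIV. (A *v u) $ j * w $ j)"
    by (simp add: matrix_vector_mult_def sum_distrib_right)
  finally show ?thesis
    by (simp add: Omega_def a b sum_subtractf)
qed

lemma mem_Lplus_if_Omega_orthogonal:
  assumes A: "transpose A = A" and orth: "\<And>w. w \<in> Lplus A \<Longrightarrow> Omega a w = 0"
  shows "a \<in> Lplus A"
proof -
  obtain p q where a: "a = (p, q)" by (cases a)
  have "q $ k = (A *v p) $ k" for k
  proof -
    have col: "(A *v axis k 1) $ i = A $ i $ k" for i
      by (simp add: matrix_vector_mult_def axis_def if_distrib cong: if_cong)
    have "(\<Sum>i\<in>UNIV. q $ i * axis k 1 $ i) = q $ k"
      by (simp add: axis_def if_distrib cong: if_cong)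
    then have "Omega a (axis k 1, A *v axis k 1) = (\<Sum>i\<in>UNIV. p $ i * A $ i $ k) - q $ k"
      by (simp add: Omega_def a col sum_subtractf)
    moreover have "Omega a (axis k 1, A *v axis k 1) = 0"
      using orth unfolding Lplus_def by blast
    ultimately show ?thesis
      by (simp add: matrix_vector_mult_def symmetric_matrix_entry[OF A, of k] mult.commute)
  qed
  then show ?thesis
    unfolding Lplus_def a by (auto simp: vec_eq_iff)
qed

definition of_real_mat :: "real^'n^'m \<Rightarrow> complex^'n^'m" where
  "of_real_mat A = (\<chi> i j. complex_of_real (A $ i $ j))"

lemma of_real_mat_mult: "of_real_mat (A ** B) = of_real_mat A ** of_real_mat B"
  by (simp add: of_real_mat_def matrix_matrix_mult_def vec_eq_iff)

lemma of_real_mat_1: "of_real_mat (mat 1) = mat 1"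
  by (simp add: of_real_mat_def mat_def vec_eq_iff)

lemma invertible_of_real_mat: "invertible A \<Longrightarrow> invertible (of_real_mat A)"
  unfolding invertible_def by (metis of_real_mat_mult of_real_mat_1)

lemma matrix_vector_mult_diff_cnj_mat:
  "M *v u - cnj_mat M *v u = (2 * \<i>) *s (of_real_mat (im_mat M) *v u)"
proof -
  have "M $ i $ j - cnj (M $ i $ j) = 2 * \<i> * complex_of_real (Im (M $ i $ j))" for i j
    by (simp add: complex_eq_iff)
  then show ?thesis
    by (simp add: vec_eq_iff matrix_vector_mult_def cnj_mat_def of_real_mat_def im_mat_def
        sum_subtractf[symmetric] sum_distrib_left left_diff_distrib[symmetric] mult.assoc)
qed

lemma Lplus_Lminus_decomposition:
  assumes "det (im_mat M) \<noteq> 0"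
  shows "\<exists>!a. a \<in> Lplus M \<and> v - a \<in> Lminus M"
proof -
  let ?K = "of_real_mat (im_mat M)" and ?N = "cnj_mat M"
  obtain B where K: "?K ** B = mat 1" "B ** ?K = mat 1"
    using assms invertible_det_nz invertible_of_real_mat invertible_def by metis
  define c where "c = (1 / (2 * \<i>)) *s (snd v - ?N *v fst v)"
  have "v - (u, M *v u) \<in> Lminus M \<longleftrightarrow> M *v u - ?N *v u = snd v - ?N *v fst v" for u
    by (auto simp: Lminus_eq_Lplus_cnj_mat mem_Lplus_iff matrix_vector_mult_diff_distrib algebra_simps)
  also have "\<dots> u \<longleftrightarrow> ?K *v u = c" for u
    by (simp add: matrix_vector_mult_diff_cnj_mat c_def vec_eq_iff field_simps)
  also have "\<dots> u \<longleftrightarrow> u = B *v c" for u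
    by (metis K matrix_vector_mul_assoc matrix_vector_mul_lid)
  finally have "a \<in> Lplus M \<and> v - a \<in> Lminus M \<longleftrightarrow> a = (B *v c, M *v (B *v c))" for a
    by (cases a) (auto simp: mem_Lplus_iff)
  then show ?thesis by (simp add: Ex1_def)
qed

lemma proj_plus_eq_iff:
  assumes "det (im_mat M) \<noteq> 0" and "a \<in> Lplus M"
  shows "a = proj_plus M v \<longleftrightarrow> a - v \<in> Lminus M"
proof -
  have "a = proj_plus M v \<longleftrightarrow> v - a \<in> Lminus M"
    unfolding proj_plus_def using Lplus_Lminus_decomposition[OF assms(1), of v] assms(2)
    by (metis (mono_tags, lifting) the_equality theI')
  then show ?thesis
    by (simp add: Lminus_eq_Lplus_cnj_mat diff_mem_Lplus_commute)
qed

section \<open>Holomorphic Hamiltonians\<close>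

lemma holo_has_derivative: "holo H \<Longrightarrow> (H has_derivative frechet_derivative H (at x)) (at x)"
  using frechet_derivative_works holo_def by blast

lemma linear_frechet_derivative_holo: "holo H \<Longrightarrow> linear (frechet_derivative H (at x))"
  using holo_has_derivative has_derivative_linear by blast

lemma frechet_derivative_holo_cmul:
  "holo H \<Longrightarrow> frechet_derivative H (at x) (cmul c v) = c * frechet_derivative H (at x) v"
  by (metis holo_def linear_cmul_commute linear_frechet_derivative_holo)

lemma continuous_on_holo: "holo H \<Longrightarrow> continuous_on UNIV H"
  by (meson continuous_at_imp_continuous_on differentiable_imp_continuous_within holo_def)

lemma holo_has_vector_derivative_line:
  assumes "holo H"
  shows "((\<lambda>e. H (a + e *\<^sub>R b)) has_vector_derivative frechet_derivative H (at (a + e *\<^sub>R b)) b)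
           (at e)"
proof -
  have "((\<lambda>e. a + e *\<^sub>R b) has_vector_derivative b) (at e)"
    by (auto intro!: derivative_eq_intros)
  from vector_derivative_diff_chain_within[OF this
      has_derivative_at_withinI[OF holo_has_derivative[OF assms]]]
  show ?thesis by (simp add: o_def)
qed

lemma holo_has_field_derivative_cmul_line:
  assumes "holo H"
  shows "((\<lambda>w. H (x + cmul w v)) has_field_derivative frechet_derivative H (at (x + cmul w v)) v)
           (at w)"
proof -
  have "((\<lambda>w. x + cmul w v) has_derivative (\<lambda>h. cmul h v)) (at w)"
    using has_derivative_add[OF has_derivative_const
        bounded_linear_imp_has_derivative[OF bounded_linear_cmul]]
    by simp
  from diff_chain_at[OF this holo_has_derivative[OF assms]]
  moreover have "(\<lambda>h. frechet_derivative H (at (x + cmul w v)) (cmul h v))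
      = (*) (frechet_derivative H (at (x + cmul w v)) v)"
    by (simp add: fun_eq_iff frechet_derivative_holo_cmul[OF assms] mult.commute)
  ultimately show ?thesis
    by (simp add: has_field_derivative_def o_def)
qed

lemma norm_frechet_derivative_holo_diff_le:
  assumes hol: "holo H"
    and bound: "\<And>w. norm w = 1 \<Longrightarrow> norm (H (x + cmul w v) - H (y + cmul w v)) \<le> B"
  shows "norm (frechet_derivative H (at x) v - frechet_derivative H (at y) v) \<le> B"
proof -
  let ?D = "\<lambda>x. frechet_derivative H (at x) v"
  let ?psi = "\<lambda>w. H (x + cmul w v) - H (y + cmul w v)"
  have der: "(?psi has_field_derivative ?D (x + cmul w v) - ?D (y + cmul w v)) (at w)" for w
    by (intro derivative_intros holo_has_field_derivative_cmul_line[OF hol])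
  have "?psi holomorphic_on ball 0 1"
    using der holomorphic_on_def field_differentiable_def has_field_derivative_at_within by blast
  moreover have "continuous_on (cball 0 1) ?psi"
    using der by (meson DERIV_isCont continuous_at_imp_continuous_on)
  ultimately have "norm ((deriv ^^ 1) ?psi 0) \<le> fact 1 * B / 1 ^ 1"
    by (rule Cauchy_inequality) (auto intro: bound)
  moreover have "deriv ?psi 0 = ?D x - ?D y"
    using DERIV_imp_deriv[OF der[of 0]] by simp
  ultimately show ?thesis by simp
qed

(* Real differentiability alone would not make dH continuous; for holomorphic H it
   follows from Cauchy's estimate on complex lines. *)
lemma continuous_frechet_derivative_holo:
  fixes H :: "'n::finite pt \<Rightarrow> complex"
  assumes hol: "holo H"
  shows "continuous_on UNIV (\<lambda>x. frechet_derivative H (at x) v)"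
proof (rule continuous_at_imp_continuous_on, intro ballI)
  fix x0 :: "'n pt"
  let ?D = "\<lambda>x. frechet_derivative H (at x) v"
  let ?G = "\<lambda>p. H (fst p + cmul (snd p) v)"
  let ?K = "cball x0 1 \<times> sphere (0::complex) 1"
  have "continuous_on ?K ?G"
    by (rule continuous_on_compose2[OF continuous_on_holo[OF hol]])
       (auto intro!: continuous_intros
          continuous_on_compose2[OF linear_continuous_on[OF bounded_linear_cmul]])
  then have "uniformly_continuous_on ?K ?G"
    by (intro compact_uniformly_continuous compact_Times compact_cball compact_sphere)
  show "isCont ?D x0"
    unfolding continuous_at_eps_delta
  proof (intro allI impI)
    fix e :: real assume "e > 0"
    then obtain d where "d > 0"
      and d: "\<And>p q. p \<in> ?K \<Longrightarrow> q \<in> ?K \<Longrightarrow> dist q p < d \<Longrightarrow> dist (?G q) (?G p) < e / 2"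
      using \<open>uniformly_continuous_on ?K ?G\<close> unfolding uniformly_continuous_on_def
      by (metis half_gt_zero)
    have "dist (?D x) (?D x0) \<le> e / 2" if x: "dist x x0 < min d 1" for x
      unfolding dist_norm
    proof (rule norm_frechet_derivative_holo_diff_le[OF hol])
      fix w :: complex assume "norm w = 1"
      with x have "dist (?G (x, w)) (?G (x0, w)) < e / 2"
        by (intro d) (auto simp: dist_commute dist_Pair_Pair)
      then show "norm (H (x + cmul w v) - H (x0 + cmul w v)) \<le> e / 2"
        by (simp add: dist_norm)
    qed
    then show "\<exists>d>0. \<forall>x. dist x x0 < d \<longrightarrow> dist (?D x) (?D x0) < e"
      using \<open>d > 0\<close> \<open>e > 0\<close> by (intro exI[of _ "min d 1"]) force
  qed
qed

lemma continuous_on_frechet_derivative_holo [continuous_intros]: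
  assumes hol: "holo H" and "continuous_on S p" and "continuous_on S q"
  shows "continuous_on S (\<lambda>s. frechet_derivative H (at (p s)) (q s))"
proof -
  have "frechet_derivative H (at (p s)) (q s)
      = (\<Sum>b\<in>Basis. (q s \<bullet> b) *\<^sub>R frechet_derivative H (at (p s)) b)" for s
    using linear_frechet_derivative_holo[OF hol]
    by (subst euclidean_representation[symmetric, of "q s"]) (simp add: linear_sum linear_scale)
  then show ?thesis
    by (simp only:)
       (intro continuous_intros assms continuous_on_compose2[OF continuous_frechet_derivative_holo[OF hol]],
        auto)
qed

lemma pt_eq_sum_axis:
  "w = (\<Sum>i\<in>UNIV. cmul (fst w $ i) (axis i 1, 0) + cmul (snd w $ i) (0, axis i 1))"
  by (simp add: prod_eq_iff vec_eq_iff fst_sum snd_sum sum_component cmul_def axis_def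
      if_distrib cong: if_cong)

lemma Omega_axis_fst: "Omega a (axis k 1, 0) = - snd a $ k"
  by (simp add: Omega_def axis_def if_distrib[of "(*) _"] sum_negf cong: if_cong)

lemma Omega_axis_snd: "Omega a (0, axis k 1) = fst a $ k"
  by (simp add: Omega_def axis_def if_distrib[of "(*) _"] cong: if_cong)

lemma Omega_nondegenerate: "(\<And>v. Omega X v = Omega Y v) \<Longrightarrow> X = Y"
  by (metis Omega_axis_fst Omega_axis_snd neg_equal_iff_equal prod_eq_iff vec_eq_iff)

lemma Omega_represents_complex_linear:
  assumes lin: "linear f" and cmul_i: "\<And>v. f (cmul \<i> v) = \<i> * f v"
  shows "Omega (\<chi> i. f (0, axis i 1), \<chi> i. - f (axis i 1, 0)) w = f w"
proof -
  have "f w = f (\<Sum>i\<in>UNIV. cmul (fst w $ i) (axis i 1, 0) + cmul (snd w $ i) (0, axis i 1))"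
    by (subst pt_eq_sum_axis) (rule refl)
  also have "\<dots> = (\<Sum>i\<in>UNIV. fst w $ i * f (axis i 1, 0) + snd w $ i * f (0, axis i 1))"
    by (simp add: linear_sum[OF lin] linear_add[OF lin] linear_cmul_commute[OF lin cmul_i])
  finally show ?thesis
    by (simp add: Omega_def algebra_simps)
qed

lemma ham_vf_eq:
  assumes "holo H"
  shows "ham_vf H x = (\<chi> i. frechet_derivative H (at x) (0, axis i 1),
                       \<chi> i. - frechet_derivative H (at x) (axis i 1, 0))"
proof -
  let ?X = "(\<chi> i. frechet_derivative H (at x) (0, axis i 1),
             \<chi> i. - frechet_derivative H (at x) (axis i 1, 0))"
  have X: "\<forall>v. Omega ?X v = frechet_derivative H (at x) v"
    using Omega_represents_complex_linear[OF linear_frechet_derivative_holo frechet_derivative_holo_cmul]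
      assms
    by blast
  show ?thesis
    unfolding ham_vf_def
  proof (rule the_equality)
    show "\<forall>v. Omega ?X v = frechet_derivative H (at x) v"
      by (rule X)
    show "Y = ?X" if "\<forall>v. Omega Y v = frechet_derivative H (at x) v" for Y
      by (intro Omega_nondegenerate) (simp only: that[rule_format] X[rule_format])
  qed
qed

lemma Omega_ham_vf:
  assumes "holo H"
  shows "Omega (ham_vf H x) w = frechet_derivative H (at x) w"
  unfolding ham_vf_eq[OF assms]
  using Omega_represents_complex_linear[OF linear_frechet_derivative_holo frechet_derivative_holo_cmul]
    assms
  by blast

lemma continuous_on_ham_vf [continuous_intros]:
  assumes "holo H" and "continuous_on S p"
  shows "continuous_on S (\<lambda>s. ham_vf H (p s))"
  unfolding ham_vf_eq[OF assms(1)]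
  by (intro continuous_on_Pair continuous_on_vec_lambda continuous_intros assms)

section \<open>The du Bois-Reymond lemma\<close>

lemma C1_on_vector_derivative:
  assumes "t0 < t1" and "C1_on f t0 t1"
  shows "\<And>t. t \<in> {t0..t1} \<Longrightarrow>
           (f has_vector_derivative vector_derivative f (at t within {t0..t1}))
             (at t within {t0..t1})"
    and "continuous_on {t0..t1} (\<lambda>t. vector_derivative f (at t within {t0..t1}))"
proof -
  obtain f' where f': "\<forall>t\<in>{t0..t1}. (f has_vector_derivative f' t) (at t within {t0..t1})"
    and "continuous_on {t0..t1} f'"
    using assms(2) unfolding C1_on_def by blast
  moreover have "vector_derivative f (at t within {t0..t1}) = f' t" if "t \<in> {t0..t1}" for t
    using vector_derivative_within_cbox[of t0 t1 t f "f' t"] assms(1) that f'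
    by (simp add: cbox_interval)
  ultimately show "t \<in> {t0..t1} \<Longrightarrow>
      (f has_vector_derivative vector_derivative f (at t within {t0..t1})) (at t within {t0..t1})"
    and "continuous_on {t0..t1} (\<lambda>t. vector_derivative f (at t within {t0..t1}))" for t
    by (auto elim!: continuous_on_eq)
qed

lemma constant_if_orthogonal_to_mean_zero:
  fixes G :: "real \<Rightarrow> complex"
  assumes t01: "t0 < t1" and cG: "continuous_on {t0..t1} G"
    and orth: "\<And>h. continuous_on {t0..t1} h \<Longrightarrow> integral {t0..t1} h = 0 \<Longrightarrow>
                 integral {t0..t1} (\<lambda>s. h s * G s) = 0"
  shows "\<exists>\<mu>. \<forall>s\<in>{t0..t1}. G s = \<mu>"
proof -
  let ?I = "{t0..t1}"
  define \<mu> where "\<mu> = integral ?I G / of_real (t1 - t0)"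
  define h where "h s = cnj (G s - \<mu>)" for s
  have ch: "continuous_on ?I h"
    unfolding h_def by (intro continuous_intros cG)
  have "integral ?I (\<lambda>s. G s - \<mu>) = integral ?I G - (t1 - t0) *\<^sub>R \<mu>"
    using t01 cG by (simp add: integral_diff integrable_continuous_interval)
  also have "\<dots> = 0"
    using t01 by (simp add: \<mu>_def scaleR_conv_of_real)
  finally have h0: "integral ?I h = 0"
    by (simp only: h_def[abs_def] integral_cnj[symmetric] complex_cnj_zero)
  define r where "r s = (norm (G s - \<mu>))\<^sup>2" for s
  have cr: "continuous_on ?I r"
    unfolding r_def by (intro continuous_intros cG)
  have "complex_of_real (integral ?I r) = integral ?I (\<lambda>s. complex_of_real (r s))"
    by (rule integral_unique[symmetric], intro has_integral_of_real integrable_integral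
        integrable_continuous_interval cr)
  also have "\<dots> = integral ?I (\<lambda>s. h s * G s - \<mu> * h s)"
    unfolding r_def h_def complex_norm_square by (simp add: algebra_simps)
  also have "\<dots> = 0"
    using orth[OF ch h0] h0 cG ch
    by (simp add: integral_diff integrable_continuous_interval continuous_intros)
  finally have "integral ?I r = 0"
    by simp
  then have "\<forall>s\<in>?I. r s = 0"
    using integral_eq_0_iff[OF cr t01] by (simp add: r_def)
  then show ?thesis by (auto simp: r_def)
qed

lemma du_Bois_Reymond:
  fixes g :: "real \<Rightarrow> complex"
  assumes t01: "t0 < t1" and cg: "continuous_on {t0..t1} g"
    and orth: "\<And>c. C1_on c t0 t1 \<Longrightarrow> c t0 = 0 \<Longrightarrow> c t1 = 0 \<Longrightarrow>
                 integral {t0..t1} (\<lambda>s. c s * g s) = 0"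
    and t: "t \<in> {t0..t1}"
  shows "g t = 0"
proof -
  let ?I = "{t0..t1}"
  define G where "G s = integral {t0..s} g" for s
  have G': "(G has_vector_derivative g s) (at s within ?I)" if "s \<in> ?I" for s
    unfolding G_def using integral_has_vector_derivative[OF cg that] .
  have cG: "continuous_on ?I G"
    using G' continuous_on_vector_derivative by blast
  have "integral ?I (\<lambda>s. h s * G s) = 0"
    if ch: "continuous_on ?I h" and h0: "integral ?I h = 0" for h
  proof -
    define c where "c s = integral {t0..s} h" for s
    have c': "(c has_vector_derivative h s) (at s within ?I)" if "s \<in> ?I" for s
      unfolding c_def using integral_has_vector_derivative[OF ch that] .
    then have cc: "continuous_on ?I c"
      using continuous_on_vector_derivative by blast
    have c0: "c t0 = 0" and c1: "c t1 = 0"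
      using h0 by (simp_all add: c_def)
    have "C1_on c t0 t1"
      unfolding C1_on_def using c' ch by blast
    then have cg0: "integral ?I (\<lambda>s. c s * g s) = 0"
      using c0 c1 by (rule orth)
    have "((\<lambda>s. c s * g s + h s * G s) has_integral c t1 * G t1 - c t0 * G t0) ?I"
      using t01
      by (intro fundamental_theorem_of_calculus) (auto intro!: has_vector_derivative_mult c' G')
    then have "integral ?I (\<lambda>s. c s * g s + h s * G s) = 0"
      by (simp add: c0 c1 integral_unique)
    moreover have "integral ?I (\<lambda>s. c s * g s + h s * G s)
        = integral ?I (\<lambda>s. c s * g s) + integral ?I (\<lambda>s. h s * G s)"
      by (intro integral_add integrable_continuous_interval continuous_intros cc cg ch cG)
    ultimately show ?thesis
      using cg0 by simp
  qed
  then obtain \<mu> where \<mu>: "\<forall>s\<in>?I. G s = \<mu>"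
    using constant_if_orthogonal_to_mean_zero[OF t01 cG] by blast
  have "((\<lambda>_. \<mu>) has_vector_derivative g t) (at t within ?I)"
    using has_vector_derivative_transform[OF t _ G'[OF t]] \<mu> by simp
  then show ?thesis
    using vector_derivative_unique_within_closed_interval[of t0 t1 t "\<lambda>_. \<mu>" "g t" 0] t01 t
    by (simp add: cbox_interval)
qed

section \<open>The first variation of the action\<close>

lemma has_vector_derivative_action_along_line:
  fixes z dz z' dz' :: "real \<Rightarrow> 'n::finite pt"
  assumes hol: "holo H" and t01: "t0 < t1"
    and z': "\<And>t. t \<in> {t0..t1} \<Longrightarrow> (z has_vector_derivative z' t) (at t within {t0..t1})"
    and cz': "continuous_on {t0..t1} z'"
    and dz': "\<And>t. t \<in> {t0..t1} \<Longrightarrow> (dz has_vector_derivative dz' t) (at t within {t0..t1})"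
    and cdz': "continuous_on {t0..t1} dz'"
  shows "((\<lambda>e. action H (\<lambda>t. z t + e *\<^sub>R dz t) t0 t1) has_vector_derivative
           integral {t0..t1} (\<lambda>t. theta (dz t) (z' t) + theta (z t) (dz' t)
                                   - frechet_derivative H (at (z t)) (dz t))) (at 0)"
proof -
  let ?I = "{t0..t1}"
  have cz: "continuous_on ?I z" and cdz: "continuous_on ?I dz"
    using z' dz' continuous_on_vector_derivative by blast+
  define f where
    "f e t = theta (z t + e *\<^sub>R dz t) (z' t + e *\<^sub>R dz' t) - H (z t + e *\<^sub>R dz t)" for e t
  define f' where "f' e t = theta (dz t) (z' t + e *\<^sub>R dz' t) + theta (z t + e *\<^sub>R dz t) (dz' t)
      - frechet_derivative H (at (z t + e *\<^sub>R dz t)) (dz t)" for e t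
  have "vector_derivative (\<lambda>t. z t + e *\<^sub>R dz t) (at t within ?I) = z' t + e *\<^sub>R dz' t"
    if "t \<in> ?I" for e t
    using t01 that
    by (intro vector_derivative_within_cbox[of t0 t1 t, unfolded cbox_interval]
        has_vector_derivative_add z' bounded_linear.has_vector_derivative[OF bounded_linear_scaleR_right]
        dz') auto
  then have action_eq: "action H (\<lambda>t. z t + e *\<^sub>R dz t) t0 t1 = integral (cbox t0 t1) (f e)" for e
    unfolding action_def cbox_interval f_def by (intro integral_cong) simp
  have "((\<lambda>e. f e t) has_vector_derivative f' e t) (at e within UNIV)" for e t
    unfolding f_def f'_def
    by (intro has_vector_derivative_diff has_vector_derivative_theta
        holo_has_vector_derivative_line[OF hol])
       (auto intro!: derivative_eq_intros)
  moreover have "continuous_on ?I (f e)" for e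
    unfolding f_def
    by (intro continuous_intros continuous_on_compose2[OF continuous_on_holo[OF hol]] cz cdz cz' cdz')
       auto
  moreover have "continuous_on (UNIV \<times> cbox t0 t1) (\<lambda>(e, t). f' e t)"
  proof -
    have snd: "continuous_on (UNIV \<times> ?I) (\<lambda>p. g (snd p))"
      if "continuous_on ?I g" for g :: "real \<Rightarrow> 'n pt"
      by (rule continuous_on_compose2[OF that continuous_on_snd[OF continuous_on_id]]) auto
    have "continuous_on (UNIV \<times> ?I) (\<lambda>p. f' (fst p) (snd p))"
      unfolding f'_def by (intro continuous_intros hol snd cz cdz cz' cdz')
    then show ?thesis
      by (simp add: cbox_interval case_prod_beta')
  qed
  ultimately have "((\<lambda>e. integral (cbox t0 t1) (f e)) has_vector_derivative
      integral (cbox t0 t1) (f' 0)) (at 0 within UNIV)"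
    by (intro leibniz_rule_vector_derivative)
       (auto simp: cbox_interval intro: integrable_continuous_interval)
  then show ?thesis
    by (simp add: action_eq f'_def[abs_def] cbox_interval)
qed

lemma first_variation:
  fixes z dz :: "real \<Rightarrow> 'n::finite pt"
  assumes hol: "holo H" and t01: "t0 < t1" and "C1_on z t0 t1" and "C1_on dz t0 t1"
    and dz0: "dz t0 = 0" and dz1: "dz t1 = 0"
  shows "((\<lambda>e. action H (\<lambda>t. z t + e *\<^sub>R dz t) t0 t1) has_vector_derivative
           integral {t0..t1}
             (\<lambda>t. Omega (vector_derivative z (at t within {t0..t1}) - ham_vf H (z t)) (dz t)))
         (at 0)"
proof -
  let ?I = "{t0..t1}"
  let ?z' = "\<lambda>t. vector_derivative z (at t within ?I)"
  let ?dz' = "\<lambda>t. vector_derivative dz (at t within ?I)"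
  let ?E = "\<lambda>t. ?z' t - ham_vf H (z t)"
  let ?B = "\<lambda>t. theta (?z' t) (dz t) + theta (z t) (?dz' t)"
  note z' = C1_on_vector_derivative[OF t01 assms(3)]
  note dz' = C1_on_vector_derivative[OF t01 assms(4)]
  have cz: "continuous_on ?I z" and cdz: "continuous_on ?I dz"
    by (rule continuous_on_vector_derivative, erule z'(1) dz'(1))+
  have "(?B has_integral theta (z t1) (dz t1) - theta (z t0) (dz t0)) ?I"
    using t01
    by (intro fundamental_theorem_of_calculus) (auto intro!: has_vector_derivative_theta z' dz')
  then have "(?B has_integral 0) ?I"
    by (simp add: dz0 dz1 theta_def)
  moreover have "continuous_on ?I (\<lambda>t. Omega (?E t) (dz t))"
    by (intro continuous_on_Omega continuous_on_diff continuous_on_ham_vf hol z'(2) cz cdz)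
  ultimately have "((\<lambda>t. Omega (?E t) (dz t) + ?B t) has_integral
      integral ?I (\<lambda>t. Omega (?E t) (dz t)) + 0) ?I"
    by (intro has_integral_add integrable_integral integrable_continuous_interval)
  moreover have "theta (dz t) (?z' t) + theta (z t) (?dz' t) - frechet_derivative H (at (z t)) (dz t)
      = Omega (?E t) (dz t) + ?B t" for t
    unfolding Omega_diff_left Omega_ham_vf[OF hol] unfolding Omega_eq_theta by simp
  ultimately have "((\<lambda>t. theta (dz t) (?z' t) + theta (z t) (?dz' t)
      - frechet_derivative H (at (z t)) (dz t)) has_integral integral ?I (\<lambda>t. Omega (?E t) (dz t))) ?I"
    by (simp only:) simp
  with has_vector_derivative_action_along_line[OF hol t01 z' dz'] show ?thesis
    by (simp add: integral_unique)
qed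

lemma stationary_iff_integral_Omega_eq_0:
  fixes z dz :: "real \<Rightarrow> 'n::finite pt"
  assumes "holo H" and "t0 < t1" and "C1_on z t0 t1" and "adm_var M dz t0 t1"
  shows "((\<lambda>e. action H (\<lambda>t. z t + e *\<^sub>R dz t) t0 t1) has_vector_derivative 0) (at 0)
    \<longleftrightarrow> integral {t0..t1}
          (\<lambda>t. Omega (vector_derivative z (at t within {t0..t1}) - ham_vf H (z t)) (dz t)) = 0"
proof -
  have "((\<lambda>e. action H (\<lambda>t. z t + e *\<^sub>R dz t) t0 t1) has_vector_derivative
      integral {t0..t1}
        (\<lambda>t. Omega (vector_derivative z (at t within {t0..t1}) - ham_vf H (z t)) (dz t))) (at 0)"
    using assms(4) unfolding adm_var_def by (intro first_variation assms(1-3)) auto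
  then show ?thesis
    by (auto dest: vector_derivative_unique_at)
qed

section \<open>Stationary curves\<close>

lemma adm_var_cmul:
  assumes "C1_on c t0 t1" and "c t0 = 0" and "c t1 = 0" and "w \<in> Lminus M"
  shows "adm_var M (\<lambda>t. cmul (c t) w) t0 t1"
proof -
  obtain c' where c': "\<forall>t\<in>{t0..t1}. (c has_vector_derivative c' t) (at t within {t0..t1})"
    and "continuous_on {t0..t1} c'"
    using assms(1) unfolding C1_on_def by blast
  have "((\<lambda>t. cmul (c t) w) has_vector_derivative cmul (c' t) w) (at t within {t0..t1})"
    if "t \<in> {t0..t1}" for t
    using bounded_linear.has_vector_derivative[OF bounded_linear_cmul c'[rule_format, OF that]] .
  moreover have "continuous_on {t0..t1} (\<lambda>t. cmul (c' t) w)"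
    using bounded_linear.continuous_on[OF bounded_linear_cmul \<open>continuous_on {t0..t1} c'\<close>] .
  ultimately have "C1_on (\<lambda>t. cmul (c t) w) t0 t1"
    unfolding C1_on_def by (intro exI[of _ "\<lambda>t. cmul (c' t) w"]) auto
  then show ?thesis
    using assms by (simp add: adm_var_def Lminus_eq_Lplus_cnj_mat cmul_mem_Lplus)
qed

lemma integral_Omega_adm_var_eq_0_iff:
  fixes E :: "real \<Rightarrow> 'n::finite pt"
  assumes M: "transpose M = M" and t01: "t0 < t1" and cE: "continuous_on {t0..t1} E"
  shows "(\<forall>dz. adm_var M dz t0 t1 \<longrightarrow> integral {t0..t1} (\<lambda>t. Omega (E t) (dz t)) = 0)
         \<longleftrightarrow> (\<forall>t\<in>{t0..t1}. E t \<in> Lminus M)"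
proof -
  have sym: "transpose (cnj_mat M) = cnj_mat M"
    by (simp add: transpose_cnj_mat M)
  show ?thesis
  proof
    assume orth: "\<forall>dz. adm_var M dz t0 t1 \<longrightarrow> integral {t0..t1} (\<lambda>t. Omega (E t) (dz t)) = 0"
    show "\<forall>t\<in>{t0..t1}. E t \<in> Lminus M"
    proof
      fix t assume t: "t \<in> {t0..t1}"
      have "Omega (E t) w = 0" if w: "w \<in> Lminus M" for w
      proof (rule du_Bois_Reymond[OF t01 _ _ t])
        show "continuous_on {t0..t1} (\<lambda>s. Omega (E s) w)"
          by (intro continuous_on_Omega cE continuous_on_const)
        fix c :: "real \<Rightarrow> complex"
        assume "C1_on c t0 t1" and "c t0 = 0" and "c t1 = 0"
        then have "integral {t0..t1} (\<lambda>s. Omega (E s) (cmul (c s) w)) = 0"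
          using orth adm_var_cmul[OF \<open>C1_on c t0 t1\<close> \<open>c t0 = 0\<close> \<open>c t1 = 0\<close> w] by blast
        then show "integral {t0..t1} (\<lambda>s. c s * Omega (E s) w) = 0"
          by (simp add: Omega_cmul_right)
      qed
      then show "E t \<in> Lminus M"
        unfolding Lminus_eq_Lplus_cnj_mat by (rule mem_Lplus_if_Omega_orthogonal[OF sym])
    qed
  next
    assume "\<forall>t\<in>{t0..t1}. E t \<in> Lminus M"
    then have "integral {t0..t1} (\<lambda>t. Omega (E t) (dz t)) = integral {t0..t1} (\<lambda>_. 0)"
      if "adm_var M dz t0 t1" for dz
      using that Omega_Lplus_eq_0[OF sym]
      by (intro integral_cong) (auto simp: adm_var_def Lminus_eq_Lplus_cnj_mat)
    then show "\<forall>dz. adm_var M dz t0 t1 \<longrightarrow> integral {t0..t1} (\<lambda>t. Omega (E t) (dz t)) = 0"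
      by simp
  qed
qed

theorem mainTheorem8:
  fixes M :: "complex^'n::finite^'n" and H :: "'n pt \<Rightarrow> complex"
    and z :: "real \<Rightarrow> 'n pt" and t0 t1 :: real
  assumes "transpose M = M"
    and "det (im_mat M) \<noteq> 0"
    and "holo H"
    and "real_on_reals H"
    and "t0 < t1"
    and "admissible M z t0 t1"
  shows "(\<forall>dz. adm_var M dz t0 t1 \<longrightarrow>
            ((\<lambda>\<epsilon>::real. action H (\<lambda>t. z t + \<epsilon> *\<^sub>R dz t) t0 t1) has_vector_derivative 0) (at 0))
         \<longleftrightarrow> (\<forall>t\<in>{t0..t1}. vector_derivative z (at t within {t0..t1}) = proj_plus M (ham_vf H (z t)))"
proof -
  let ?I = "{t0..t1}"
  let ?z' = "\<lambda>t. vector_derivative z (at t within ?I)"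
  let ?E = "\<lambda>t. ?z' t - ham_vf H (z t)"
  have z: "C1_on z t0 t1" and z'_Lplus: "\<forall>t\<in>?I. ?z' t \<in> Lplus M"
    using assms(6) unfolding admissible_def by blast+
  note z' = C1_on_vector_derivative[OF assms(5) z]
  have "continuous_on ?I z"
    by (rule continuous_on_vector_derivative, erule z'(1))
  then have "continuous_on ?I ?E"
    by (intro continuous_on_diff continuous_on_ham_vf assms(3) z'(2))
  have "(\<forall>dz. adm_var M dz t0 t1 \<longrightarrow>
            ((\<lambda>\<epsilon>::real. action H (\<lambda>t. z t + \<epsilon> *\<^sub>R dz t) t0 t1) has_vector_derivative 0) (at 0))
      \<longleftrightarrow> (\<forall>dz. adm_var M dz t0 t1 \<longrightarrow> integral ?I (\<lambda>t. Omega (?E t) (dz t)) = 0)"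
    using stationary_iff_integral_Omega_eq_0[OF assms(3,5) z] by auto
  also have "\<dots> \<longleftrightarrow> (\<forall>t\<in>?I. ?E t \<in> Lminus M)"
    by (rule integral_Omega_adm_var_eq_0_iff[OF assms(1,5) \<open>continuous_on ?I ?E\<close>])
  also have "\<dots> \<longleftrightarrow> (\<forall>t\<in>?I. ?z' t = proj_plus M (ham_vf H (z t)))"
    using z'_Lplus by (simp add: proj_plus_eq_iff[OF assms(2)])
  finally show ?thesis .
qed

end
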